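(* Let $n\ge2$, $k,\nu\in\mathbb{C}$. For a smooth function $\varphi$ on an open subset of $\mathbb{R}_{>0}^n$ satisfying $(\vartheta_1+\cdots+\vartheta_n)\varphi=0$, write (via $y_i=z_i/z_n$, $1\le i\le n-1$) $\varphi=(y_1\cdots y_{n-1})^{-\nu/n}u(y_1,\dots,y_{n-1})$. Then $\varphi$ satisfies \[ \Delta_{ij}\varphi=-\frac{\nu(\nu+nk)}{n^2}\varphi\qquad(1\le i<j\le n) \] if and only if $u$ satisfies Lauricella's system $(E_D)$ in the variables $y_1,\dots,y_{n-1}$ with parameters $\alpha=-\nu$, $\beta_1=\cdots=\beta_{n-1}=k$, $\gamma=-\nu-k+1$. Moreover, in the variables $x_i=1-y_i$ the same system for $u$ is equivalent to $(E_D)$ in $x_1,\dots,x_{n-1}$ with parameters $\alpha=-\nu$, $\beta_1=\cdots=\beta_{n-1}=k$, $\gamma=nk$.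
   Context: $\vartheta_i=z_i\partial/\partial z_i$. For $1\le i<j\le n$, $\Delta_{ij}=\vartheta_i\vartheta_j-\frac{k}{2}\frac{z_i+z_j}{z_i-z_j}(\vartheta_i-\vartheta_j)+\bigl(\frac{\nu}{n}+\frac{k}{2}\bigr)(\vartheta_i+\vartheta_j)$. The condition $(\vartheta_1+\cdots+\vartheta_n)\varphi=0$ means $\varphi$ is homogeneous of degree 0, hence a function of $y_1,\dots,y_{n-1}$. Lauricella's system $(E_D)$ in variables $t_1,\dots,t_{m}$ ($m=n-1$) with parameters $\alpha,\beta_1,\dots,\beta_m,\gamma$, writing $\vartheta_i=t_i\partial/\partial t_i$: $t_i(\vartheta_i+\beta_i)\vartheta_jF=t_j(\vartheta_j+\beta_j)\vartheta_iF$ for $1\le i<j\le m$, and $\vartheta_i(\vartheta_1+\cdots+\vartheta_m+\gamma-1)F=t_i(\vartheta_i+\beta_i)(\vartheta_1+\cdots+\vartheta_m+\alpha)F$ for $1\le i\le m$. *)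

theory Defs
  imports "HOL-Analysis.Analysis"
begin

definition pd :: "'i::finite \<Rightarrow> (real^'i \<Rightarrow> complex) \<Rightarrow> real^'i \<Rightarrow> complex" where
  "pd i f z = vector_derivative (\<lambda>t. f (z + t *\<^sub>R axis i 1)) (at 0)"

fun iter_pd :: "'i::finite list \<Rightarrow> (real^'i \<Rightarrow> complex) \<Rightarrow> real^'i \<Rightarrow> complex" where
  "iter_pd [] f = f"
| "iter_pd (i # is) f = pd i (iter_pd is f)"

definition smooth_on :: "(real^'i::finite) set \<Rightarrow> (real^'i \<Rightarrow> complex) \<Rightarrow> bool" where
  "smooth_on U f \<longleftrightarrow>
     (\<forall>is. continuous_on U (iter_pd is f) \<and>
       (\<forall>i. \<forall>z\<in>U. (\<lambda>t. iter_pd is f (z + t *\<^sub>R axis i 1)) differentiable (at 0)))"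

definition theta :: "'i::finite \<Rightarrow> (real^'i \<Rightarrow> complex) \<Rightarrow> real^'i \<Rightarrow> complex" where
  "theta i f = (\<lambda>z. complex_of_real (z $ i) * pd i f z)"

definition theta_sum :: "(real^'i::finite \<Rightarrow> complex) \<Rightarrow> real^'i \<Rightarrow> complex" where
  "theta_sum f = (\<lambda>z. \<Sum>i\<in>UNIV. theta i f z)"

definition Delta :: "complex \<Rightarrow> complex \<Rightarrow> 'i::finite \<Rightarrow> 'i \<Rightarrow> (real^'i \<Rightarrow> complex) \<Rightarrow> real^'i \<Rightarrow> complex" where
  "Delta k \<nu> i j f z =
     theta i (theta j f) z
     - k / 2 * (complex_of_real (z $ i + z $ j) / complex_of_real (z $ i - z $ j))
         * (theta i f z - theta j f z)
     + (\<nu> / of_nat CARD('i) + k / 2) * (theta i f z + theta j f z)"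

text \<open>Index order on {1..n} encoded as 'm option: Some a = index a in {1..n-1},
None = index n (the largest).\<close>

definition idx_less :: "'m::linorder option \<Rightarrow> 'm option \<Rightarrow> bool" where
  "idx_less i j = (case (i, j) of
      (Some a, Some b) \<Rightarrow> a < b
    | (Some a, None) \<Rightarrow> True
    | _ \<Rightarrow> False)"

definition ymap :: "real^(('m::finite) option) \<Rightarrow> real^'m" where
  "ymap z = (\<chi> a. z $ Some a / z $ None)"

definition lauricella_ED ::
  "complex \<Rightarrow> ('m::{finite,linorder} \<Rightarrow> complex) \<Rightarrow> complex
     \<Rightarrow> (real, 'm) vec set \<Rightarrow> ((real, 'm) vec \<Rightarrow> complex) \<Rightarrow> bool" where
  "lauricella_ED \<alpha> \<beta> \<gamma> V F \<longleftrightarrow>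
     (\<forall>i j. i < j \<longrightarrow> (\<forall>t\<in>V.
        complex_of_real (t $ i) * (theta i (theta j F) t + \<beta> i * theta j F t)
        = complex_of_real (t $ j) * (theta j (theta i F) t + \<beta> j * theta i F t)))
   \<and> (\<forall>i. \<forall>t\<in>V.
        theta i (\<lambda>s. theta_sum F s + (\<gamma> - 1) * F s) t
        = complex_of_real (t $ i) *
            (theta i (\<lambda>s. theta_sum F s + \<alpha> * F s) t
             + \<beta> i * (theta_sum F t + \<alpha> * F t)))"

end

theory Submission
  imports Defs
begin

text \<open>
  Put \<open>\<sigma> = \<nu>/n\<close>. Since \<open>\<phi>\<close> is homogeneous of degree 0, \<open>\<vartheta>\<^sub>n\<phi>\<close> and \<open>\<vartheta>\<^sub>a\<vartheta>\<^sub>n\<phi>\<close> can be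
  replaced by \<open>-\<Sigma>\<^sub>b \<vartheta>\<^sub>b\<phi>\<close> and \<open>-\<Sigma>\<^sub>b \<vartheta>\<^sub>a\<vartheta>\<^sub>b\<phi>\<close>, and the \<open>\<vartheta>\<close>-jets of \<open>u = (y\<^sub>1\<cdots>y\<^sub>m)\<^sup>\<sigma> \<phi>\<close>
  are explicit in those of \<open>\<phi>\<close>. A ring identity then shows that \<open>(y\<^sub>a - y\<^sub>b) (y\<^sub>1\<cdots>y\<^sub>m)\<^sup>\<sigma>\<close>
  times \<open>\<Delta>\<^sub>a\<^sub>b\<phi> + \<sigma>(\<sigma> + k)\<phi>\<close> is the difference of the two sides of the \<open>(a, b)\<close> equation of
  the first family of \<open>E\<^sub>D\<close>, and \<open>(y\<^sub>a - 1) (y\<^sub>1\<cdots>y\<^sub>m)\<^sup>\<sigma>\<close> times \<open>\<Delta>\<^sub>a\<^sub>n\<phi> + \<sigma>(\<sigma> + k)\<phi>\<close> that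
  of the \<open>a\<close>-th equation of the second family. Written through the gradient and the
  Hessian of \<open>u\<close>, these differences are \<open>y\<^sub>a y\<^sub>b\<close> resp. \<open>y\<^sub>a\<close> times residuals that are
  continuous in \<open>z\<close>; on the points where a factor \<open>y\<^sub>a - y\<^sub>b\<close> or \<open>y\<^sub>a - 1\<close> vanishes, continuity
  (which needs the symmetry of mixed partials) gives the vanishing of the residuals.
  The substitution \<open>x = 1 - y\<close> changes the sign of the gradient and keeps the Hessian;
  it maps the first residuals to their negatives and the second ones, with
  \<open>\<gamma> = nk\<close>, to themselves plus a sum of first residuals, whence the second equivalence.
\<close>

section \<open>Partial derivatives\<close>

definition pdiff :: "'i::finite \<Rightarrow> (real^'i \<Rightarrow> complex) \<Rightarrow> real^'i \<Rightarrow> bool" where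
  "pdiff i f p \<longleftrightarrow> (\<lambda>t. f (p + t *\<^sub>R axis i 1)) differentiable (at 0)"

lemma has_vector_derivative_pd:
  "pdiff i f p \<Longrightarrow> ((\<lambda>t. f (p + t *\<^sub>R axis i 1)) has_vector_derivative pd i f p) (at 0)"
  unfolding pdiff_def pd_def using vector_derivative_works by blast

lemma pd_pdiffI:
  assumes "((\<lambda>t. f (p + t *\<^sub>R axis i 1)) has_vector_derivative D) (at 0)"
  shows "pdiff i f p \<and> pd i f p = D"
  using assms unfolding pdiff_def pd_def by (metis differentiableI_vector vector_derivative_at)

lemma has_vector_derivative_along_axis:
  fixes f :: "real^'i::finite \<Rightarrow> complex"
  assumes "pdiff i f q" "q = p + (w * s) *\<^sub>R axis i 1"
  shows "((\<lambda>t. f (p + (w * t) *\<^sub>R axis i 1)) has_vector_derivative (of_real w * pd i f q)) (at s)"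
proof -
  have g: "((\<lambda>t. w * (t - s)) has_vector_derivative w) (at s)"
    by (auto intro!: derivative_eq_intros simp: has_real_derivative_iff_has_vector_derivative[symmetric])
  have F: "((\<lambda>t. f (q + t *\<^sub>R axis i 1)) has_vector_derivative pd i f q) (at ((\<lambda>t. w * (t - s)) s))"
    using has_vector_derivative_pd[OF assms(1)] by simp
  have "(((\<lambda>t. f (q + t *\<^sub>R axis i 1)) \<circ> (\<lambda>t. w * (t - s))) has_vector_derivative (w *\<^sub>R pd i f q)) (at s)"
    by (rule vector_diff_chain_at[OF g F])
  moreover have "(\<lambda>t. f (q + t *\<^sub>R axis i 1)) \<circ> (\<lambda>t. w * (t - s)) = (\<lambda>t. f (p + (w * t) *\<^sub>R axis i 1))"
    using assms(2) by (auto simp: fun_eq_iff algebra_simps scaleR_diff_left)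
  ultimately show ?thesis by (simp add: scaleR_conv_of_real)
qed

lemma pd_pdiff_cong_open:
  fixes f g :: "real^'i::finite \<Rightarrow> complex"
  assumes "open S" "p \<in> S" "\<And>q. q \<in> S \<Longrightarrow> f q = g q"
  shows "pd i f p = pd i g p \<and> (pdiff i f p \<longleftrightarrow> pdiff i g p)"
proof -
  have "open ((\<lambda>t::real. p + t *\<^sub>R axis i 1) -` S)"
    by (rule continuous_open_vimage[OF assms(1)]) (intro continuous_intros)
  then have "eventually (\<lambda>t. t \<in> (\<lambda>t::real. p + t *\<^sub>R axis i 1) -` S) (nhds 0)"
    by (rule eventually_nhds_in_open) (use assms(2) in simp)
  then have "eventually (\<lambda>t. f (p + t *\<^sub>R axis i 1) = g (p + t *\<^sub>R axis i 1)) (nhds 0)"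
    by eventually_elim (use assms(3) in auto)
  then have eq: "\<And>D. ((\<lambda>t. f (p + t *\<^sub>R axis i 1)) has_vector_derivative D) (at 0)
      \<longleftrightarrow> ((\<lambda>t. g (p + t *\<^sub>R axis i 1)) has_vector_derivative D) (at 0)"
    by (intro has_vector_derivative_cong_ev) (use assms in \<open>auto elim: eventually_mono\<close>)
  have "pd i f p = pd i g p"
    unfolding pd_def vector_derivative_def using eq by simp
  moreover have "pdiff i f p \<longleftrightarrow> pdiff i g p"
    unfolding pdiff_def using eq vector_derivative_works differentiableI_vector by metis
  ultimately show ?thesis by blast
qed

lemma pd_add:
  assumes "pdiff i f p" "pdiff i g p"
  shows "pdiff i (\<lambda>q. f q + g q) p \<and> pd i (\<lambda>q. f q + g q) p = pd i f p + pd i g p"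
  by (rule pd_pdiffI, rule has_vector_derivative_add[OF assms[THEN has_vector_derivative_pd]])

lemma pd_mult:
  assumes "pdiff i f p" "pdiff i g p"
  shows "pdiff i (\<lambda>q. f q * g q) p \<and> pd i (\<lambda>q. f q * g q) p = f p * pd i g p + pd i f p * g p"
  using pd_pdiffI[OF has_vector_derivative_mult[OF assms[THEN has_vector_derivative_pd]]] by simp

lemma pd_cmult:
  assumes "pdiff i f p"
  shows "pdiff i (\<lambda>q. c * f q) p \<and> pd i (\<lambda>q. c * f q) p = c * pd i f p"
  by (rule pd_pdiffI) (intro has_vector_derivative_pd[OF assms] derivative_intros)

lemma pd_sum:
  assumes "\<And>a. a \<in> A \<Longrightarrow> pdiff i (F a) p"
  shows "pdiff i (\<lambda>q. \<Sum>a\<in>A. F a q) p \<and> pd i (\<lambda>q. \<Sum>a\<in>A. F a q) p = (\<Sum>a\<in>A. pd i (F a) p)"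
  by (rule pd_pdiffI, rule has_vector_derivative_sum) (use has_vector_derivative_pd assms in blast)

lemma pd_comp_coord:
  fixes p :: "real^'i::finite"
  assumes "(g has_real_derivative g') (at (p$j))"
  shows "pdiff i (\<lambda>q. complex_of_real (g (q$j))) p \<and>
         pd i (\<lambda>q. complex_of_real (g (q$j))) p = (if i = j then of_real g' else 0)"
proof (cases "i = j")
  case True
  have "((\<lambda>t. g (p$j + t)) has_real_derivative g') (at 0)"
    using DERIV_chain2[OF _ DERIV_ident[THEN DERIV_add[OF DERIV_const]], of g g' "p$j" 0] assms by simp
  then have "((\<lambda>t. complex_of_real (g (p$j + t))) has_vector_derivative of_real g') (at 0)"
    by (rule has_vector_derivative_of_real)
  with True show ?thesis by (intro pd_pdiffI) (simp add: axis_def)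
next
  case False
  then show ?thesis by (intro pd_pdiffI) (simp add: axis_def)
qed

lemma pd_coord:
  fixes p :: "real^'i::finite"
  shows "pdiff i (\<lambda>q. complex_of_real (q$j)) p \<and> pd i (\<lambda>q. complex_of_real (q$j)) p = (if i = j then 1 else 0)"
  using pd_comp_coord[of "\<lambda>x. x" 1 p j i] by simp

lemma pd_inverse_coord:
  fixes p :: "real^'i::finite"
  assumes "p$j \<noteq> 0"
  shows "pdiff i (\<lambda>q. complex_of_real (1 / q$j)) p"
proof -
  have "((\<lambda>x. 1 / x) has_real_derivative (- 1 / (p$j)\<^sup>2)) (at (p$j))"
    using assms by (auto intro!: derivative_eq_intros simp: power2_eq_square field_simps)
  from pd_comp_coord[OF this] show ?thesis by blast
qed

subsection \<open>Symmetry of mixed partial derivatives\<close>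

lemma norm_increment_le_near_derivative:
  fixes g g' :: "real \<Rightarrow> complex"
  assumes h: "0 < h" and der: "\<And>t. t \<in> {0..h} \<Longrightarrow> (g has_vector_derivative g' t) (at t)"
    and bnd: "\<And>t. t \<in> {0..h} \<Longrightarrow> norm (g' t - D) \<le> e"
  shows "norm (g h - g 0 - h *\<^sub>R D) \<le> 3 * e * h"
proof -
  have "norm (g' t - g' 0) \<le> 2 * e" if t: "t \<in> {0..h}" for t
    using norm_triangle_ineq4[of "g' t - D" "g' 0 - D"] bnd[OF t] bnd[of 0] h by auto
  then have "norm (g h - g 0 - (h - 0) *\<^sub>R g' 0) \<le> norm (h - 0) * (2 * e)"
    using h der
    by (intro vector_differentiable_bound_linearization[where S="{0..h}"])
       (auto intro: has_vector_derivative_at_within simp: closed_segment_eq_real_ivl)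
  then have 1: "norm (g h - g 0 - h *\<^sub>R g' 0) \<le> h * (2 * e)"
    using h by simp
  have 2: "norm (h *\<^sub>R g' 0 - h *\<^sub>R D) \<le> h * e"
    using bnd[of 0] h by (simp add: scaleR_diff_right[symmetric])
  have "norm (g h - g 0 - h *\<^sub>R D) \<le> norm (g h - g 0 - h *\<^sub>R g' 0) + norm (h *\<^sub>R g' 0 - h *\<^sub>R D)"
    by (metis norm_triangle_ineq diff_add_cancel add_diff_eq)
  with 1 2 show ?thesis by (simp add: algebra_simps)
qed

lemma add_axis_add_axis_in_ball:
  fixes p :: "real^'i::finite"
  assumes "\<bar>s\<bar> + \<bar>t\<bar> < r"
  shows "p + s *\<^sub>R axis i 1 + t *\<^sub>R axis j 1 \<in> ball p r"
proof -
  have "norm (s *\<^sub>R axis i 1 + t *\<^sub>R axis j 1 :: real^'i) \<le> \<bar>s\<bar> + \<bar>t\<bar>"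
    using norm_triangle_ineq[of "s *\<^sub>R axis i 1 :: real^'i" "t *\<^sub>R axis j 1"] by simp
  moreover have "dist p (p + s *\<^sub>R axis i 1 + t *\<^sub>R axis j 1) = norm (s *\<^sub>R axis i 1 + t *\<^sub>R axis j 1 :: real^'i)"
    by (simp add: dist_norm add.assoc norm_minus_commute add.commute)
  ultimately show ?thesis
    using assms by simp
qed

lemma second_difference_approx:
  fixes f :: "real^'i::finite \<Rightarrow> complex"
  assumes r: "0 < h" "2 * h < r"
    and d: "\<And>q. q \<in> ball p r \<Longrightarrow> pdiff i f q \<and> pdiff j (pd i f) q"
    and bnd: "\<And>q. q \<in> ball p r \<Longrightarrow> norm (pd j (pd i f) q - D) \<le> e"
  shows "norm (f (p + h *\<^sub>R axis i 1 + h *\<^sub>R axis j 1) - f (p + h *\<^sub>R axis j 1)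
               - f (p + h *\<^sub>R axis i 1) + f p - (h * h) *\<^sub>R D) \<le> 9 * e * h * h"
proof -
  let ?e = "axis i 1 :: real^'i" and ?d = "axis j 1 :: real^'i"
  have inb: "p + s *\<^sub>R ?e + t *\<^sub>R ?d \<in> ball p r" if "s \<in> {0..h}" "t \<in> {0..h}" for s t
    using that r(2) by (intro add_axis_add_axis_in_ball) auto
  define \<psi> where "\<psi> s = f ((p + h *\<^sub>R ?d) + s *\<^sub>R ?e) - f (p + s *\<^sub>R ?e)" for s
  define \<psi>' where "\<psi>' s = pd i f (p + s *\<^sub>R ?e + h *\<^sub>R ?d) - pd i f (p + s *\<^sub>R ?e)" for s
  have der: "(\<psi> has_vector_derivative \<psi>' s) (at s)" if s: "s \<in> {0..h}" for s
  proof -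
    have "((\<lambda>t. f ((p + h *\<^sub>R ?d) + (1 * t) *\<^sub>R ?e)) has_vector_derivative
        (of_real 1 * pd i f (p + s *\<^sub>R ?e + h *\<^sub>R ?d))) (at s)"
      by (rule has_vector_derivative_along_axis) (use d inb[OF s, of h] r in \<open>auto simp: add_ac\<close>)
    moreover have "((\<lambda>t. f (p + (1 * t) *\<^sub>R ?e)) has_vector_derivative
        (of_real 1 * pd i f (p + s *\<^sub>R ?e))) (at s)"
      by (rule has_vector_derivative_along_axis) (use d inb[OF s, of 0] r in auto)
    ultimately show ?thesis
      unfolding \<psi>_def[abs_def] \<psi>'_def by (simp add: has_vector_derivative_diff)
  qed
  have bnd': "norm (\<psi>' s - h *\<^sub>R D) \<le> 3 * e * h" if s: "s \<in> {0..h}" for s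
  proof -
    define g where "g t = pd i f (p + s *\<^sub>R ?e + t *\<^sub>R ?d)" for t
    have "norm (g h - g 0 - h *\<^sub>R D) \<le> 3 * e * h"
    proof (rule norm_increment_le_near_derivative[OF r(1)])
      fix t assume t: "t \<in> {0..h}"
      have "pdiff j (pd i f) (p + s *\<^sub>R ?e + t *\<^sub>R ?d)"
        using d inb[OF s t] by blast
      from has_vector_derivative_along_axis[OF this, of "p + s *\<^sub>R ?e" 1 t]
      show "(g has_vector_derivative pd j (pd i f) (p + s *\<^sub>R ?e + t *\<^sub>R ?d)) (at t)"
        unfolding g_def by simp
      show "norm (pd j (pd i f) (p + s *\<^sub>R ?e + t *\<^sub>R ?d) - D) \<le> e"
        using bnd inb[OF s t] by blast
    qed
    then show ?thesis by (simp add: g_def \<psi>'_def)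
  qed
  have "norm (\<psi> h - \<psi> 0 - h *\<^sub>R (h *\<^sub>R D)) \<le> 3 * (3 * e * h) * h"
    by (rule norm_increment_le_near_derivative[OF r(1) der bnd'])
  moreover have "p + h *\<^sub>R ?d + h *\<^sub>R ?e = p + h *\<^sub>R ?e + h *\<^sub>R ?d"
    by (simp add: add_ac)
  ultimately show ?thesis
    unfolding \<psi>_def by (simp add: algebra_simps)
qed

lemma norm_pd_pd_diff_le:
  fixes f :: "real^'i::finite \<Rightarrow> complex"
  assumes S: "open S" "p \<in> S"
    and d: "\<And>q. q \<in> S \<Longrightarrow> pdiff i f q \<and> pdiff j (pd i f) q \<and> pdiff j f q \<and> pdiff i (pd j f) q"
    and c1: "continuous_on S (pd j (pd i f))" and c2: "continuous_on S (pd i (pd j f))"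
    and e: "e > 0"
  shows "norm (pd j (pd i f) p - pd i (pd j f) p) \<le> 18 * e"
proof -
  define D1 where "D1 = pd j (pd i f) p"
  define D2 where "D2 = pd i (pd j f) p"
  obtain r0 where r0: "r0 > 0" "ball p r0 \<subseteq> S"
    using S open_contains_ball by blast
  obtain r1 where r1: "r1 > 0" "\<And>q. q \<in> S \<Longrightarrow> dist q p < r1 \<Longrightarrow> dist (pd j (pd i f) q) D1 < e"
    using c1 S(2) e unfolding continuous_on_iff D1_def by blast
  obtain r2 where r2: "r2 > 0" "\<And>q. q \<in> S \<Longrightarrow> dist q p < r2 \<Longrightarrow> dist (pd i (pd j f) q) D2 < e"
    using c2 S(2) e unfolding continuous_on_iff D2_def by blast
  define r where "r = min r0 (min r1 r2)"
  define h where "h = r / 3"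
  have rp: "0 < h" "2 * h < r"
    using r0 r1 r2 by (auto simp: r_def h_def)
  have inS: "q \<in> S" "dist q p < r1" "dist q p < r2" if "q \<in> ball p r" for q
    using that r0 by (auto simp: r_def dist_commute)
  define A where "A = f (p + h *\<^sub>R axis i 1 + h *\<^sub>R axis j 1) - f (p + h *\<^sub>R axis j 1)
             - f (p + h *\<^sub>R axis i 1) + f p"
  have a1: "norm (A - (h * h) *\<^sub>R D1) \<le> 9 * e * h * h"
    unfolding A_def
  proof (rule second_difference_approx[OF rp])
    fix q assume q: "q \<in> ball p r"
    show "pdiff i f q \<and> pdiff j (pd i f) q" using d inS[OF q] by blast
    show "norm (pd j (pd i f) q - D1) \<le> e" using r1(2)[OF inS(1,2)[OF q]] by (simp add: dist_norm)
  qed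
  have "norm (f (p + h *\<^sub>R axis j 1 + h *\<^sub>R axis i 1) - f (p + h *\<^sub>R axis i 1)
             - f (p + h *\<^sub>R axis j 1) + f p - (h * h) *\<^sub>R D2) \<le> 9 * e * h * h"
  proof (rule second_difference_approx[OF rp])
    fix q assume q: "q \<in> ball p r"
    show "pdiff j f q \<and> pdiff i (pd j f) q" using d inS[OF q] by blast
    show "norm (pd i (pd j f) q - D2) \<le> e" using r2(2)[OF inS(1,3)[OF q]] by (simp add: dist_norm)
  qed
  then have a2: "norm (A - (h * h) *\<^sub>R D2) \<le> 9 * e * h * h"
    unfolding A_def by (simp add: algebra_simps add_ac)
  have "(h * h) * norm (D1 - D2) = norm ((A - (h * h) *\<^sub>R D2) - (A - (h * h) *\<^sub>R D1))"
    using rp by (simp add: algebra_simps flip: scaleR_diff_right)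
  also have "\<dots> \<le> (h * h) * (18 * e)"
    using norm_triangle_ineq4[of "A - (h * h) *\<^sub>R D2" "A - (h * h) *\<^sub>R D1"] a1 a2
    by (simp add: algebra_simps)
  finally show ?thesis
    using rp by (simp add: D1_def D2_def)
qed

theorem pd_pd_commute:
  fixes f :: "real^'i::finite \<Rightarrow> complex"
  assumes "open S" "p \<in> S"
    and "\<And>q. q \<in> S \<Longrightarrow> pdiff i f q \<and> pdiff j (pd i f) q \<and> pdiff j f q \<and> pdiff i (pd j f) q"
    and "continuous_on S (pd j (pd i f))" "continuous_on S (pd i (pd j f))"
  shows "pd j (pd i f) p = pd i (pd j f) p"
proof (rule ccontr)
  assume "pd j (pd i f) p \<noteq> pd i (pd j f) p"
  then show False
    using norm_pd_pd_diff_le[OF assms, of "norm (pd j (pd i f) p - pd i (pd j f) p) / 36"] by simp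
qed

lemma theta_pdiff: "pdiff j (pd i f) p \<Longrightarrow> pdiff j (theta i f) p"
  unfolding theta_def using pd_mult[OF conjunct1[OF pd_coord]] by blast

lemma theta_theta:
  assumes "pdiff j (pd i f) p"
  shows "theta j (theta i f) p = of_real (p$j) * ((if j = i then pd i f p else 0) + of_real (p$i) * pd j (pd i f) p)"
  unfolding theta_def[of i f] using pd_mult[OF conjunct1[OF pd_coord] assms, of i] pd_coord[of j i p]
  by (simp add: theta_def algebra_simps)

lemma theta_add:
  assumes "pdiff i f p" "pdiff i g p"
  shows "theta i (\<lambda>q. f q + g q) p = theta i f p + theta i g p"
  using pd_add[OF assms] by (simp add: theta_def algebra_simps)

lemma theta_mult:
  assumes "pdiff i f p" "pdiff i g p"
  shows "theta i (\<lambda>q. f q * g q) p = f p * theta i g p + theta i f p * g p"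
  using pd_mult[OF assms] by (simp add: theta_def algebra_simps)

lemma theta_cmult:
  assumes "pdiff i f p"
  shows "theta i (\<lambda>q. c * f q) p = c * theta i f p"
  using pd_cmult[OF assms] by (simp add: theta_def)

lemma theta_sum:
  assumes "\<And>a. a \<in> A \<Longrightarrow> pdiff i (F a) p"
  shows "theta i (\<lambda>q. \<Sum>a\<in>A. F a q) p = (\<Sum>a\<in>A. theta i (F a) p)"
  using pd_sum[of A i F p] assms by (simp add: theta_def sum_distrib_left)

lemma theta_cong_open:
  assumes "open S" "p \<in> S" "\<And>q. q \<in> S \<Longrightarrow> f q = g q"
  shows "theta i f p = theta i g p"
  using pd_pdiff_cong_open[OF assms] by (simp add: theta_def)

lemma pdiff_pd_if_pdiff_theta:
  fixes F :: "real^'i::finite \<Rightarrow> complex"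
  assumes "open N" "y \<in> N" "\<forall>q\<in>N. q$i \<noteq> 0" "pdiff j (theta i F) y"
  shows "pdiff j (pd i F) y"
proof -
  have eq: "pd i F q = theta i F q * of_real (1 / q$i)" if "q \<in> N" for q
  proof -
    have "complex_of_real (q$i) \<noteq> 0" using assms(3) that by simp
    then show ?thesis by (simp add: theta_def)
  qed
  have "pdiff j (pd i F) y \<longleftrightarrow> pdiff j (\<lambda>q. theta i F q * of_real (1 / q$i)) y"
    using pd_pdiff_cong_open[OF assms(1,2) eq, where i=j] by (rule conjunct2)
  also have "\<dots>"
    using pd_mult[OF assms(4) pd_inverse_coord[of y i j]] assms(2,3) by simp
  finally show ?thesis .
qed

section \<open>Dehomogenised coordinates\<close>

lemma card_UNIV_option_Suc: "CARD('a::finite option) = Suc CARD('a)"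
  by (simp add: UNIV_option_conv card_image)

lemma sum_UNIV_option: "(\<Sum>j\<in>(UNIV::'a::finite option set). F j) = F None + (\<Sum>a\<in>UNIV. F (Some a))"
  by (simp add: UNIV_option_conv sum.reindex)

definition homog :: "real \<Rightarrow> real^'m::finite \<Rightarrow> real^('m option)" where
  "homog w y = (\<chi> j. case j of Some a \<Rightarrow> w * y$a | None \<Rightarrow> w)"

lemma homog_Some [simp]: "homog w y $ Some a = w * y$a"
  and homog_None [simp]: "homog w y $ None = w"
  by (simp_all add: homog_def)

lemma ymap_nth [simp]: "ymap z $ a = z $ Some a / z $ None"
  by (simp add: ymap_def)

lemma ymap_homog [simp]: "w \<noteq> 0 \<Longrightarrow> ymap (homog w y) = y"
  by (simp add: vec_eq_iff)

lemma homog_ymap: "z $ None \<noteq> 0 \<Longrightarrow> homog (z $ None) (ymap z) = z"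
  unfolding vec_eq_iff by (intro allI, case_tac i) auto

lemma homog_add_axis: "homog w (y + t *\<^sub>R axis i 1) = homog w y + (w * t) *\<^sub>R axis (Some i) 1"
  by (simp add: vec_eq_iff axis_def homog_def distrib_left split: option.split)

lemma continuous_homog: "continuous_on A (homog w)"
  unfolding homog_def
proof (intro continuous_on_vec_lambda)
  show "continuous_on A (\<lambda>y. case j of Some a \<Rightarrow> w * y$a | None \<Rightarrow> w)" for j
    by (cases j) (auto intro!: continuous_intros)
qed

lemma theta_comp_homog:
  fixes f :: "real^'m::finite option \<Rightarrow> complex"
  assumes "pdiff (Some i) f (homog w y)"
  shows "pdiff i (\<lambda>y. f (homog w y)) y \<and> theta i (\<lambda>y. f (homog w y)) y = theta (Some i) f (homog w y)"
proof -
  have "((\<lambda>t. f (homog w y + (w * t) *\<^sub>R axis (Some i) 1)) has_vector_derivative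
      (of_real w * pd (Some i) f (homog w y))) (at 0)"
    by (rule has_vector_derivative_along_axis[OF assms]) simp
  then have "((\<lambda>t. f (homog w (y + t *\<^sub>R axis i 1))) has_vector_derivative
      (of_real w * pd (Some i) f (homog w y))) (at 0)"
    by (simp add: homog_add_axis)
  from pd_pdiffI[OF this] show ?thesis by (simp add: theta_def)
qed

lemma pd_comp_reflect:
  fixes f :: "real^'m::finite \<Rightarrow> complex"
  assumes "pdiff i f (1 - x)"
  shows "pdiff i (\<lambda>x. f (1 - x)) x \<and> pd i (\<lambda>x. f (1 - x)) x = - pd i f (1 - x)"
proof -
  have "((\<lambda>t. f ((1 - x) + (-1 * t) *\<^sub>R axis i 1)) has_vector_derivative
      (of_real (-1) * pd i f (1 - x))) (at 0)"
    by (rule has_vector_derivative_along_axis[OF assms]) simp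
  then have "((\<lambda>t. f (1 - (x + t *\<^sub>R axis i 1))) has_vector_derivative (- pd i f (1 - x))) (at 0)"
    by (simp add: algebra_simps)
  from pd_pdiffI[OF this] show ?thesis by simp
qed

text \<open>The factor \<open>(y\<^sub>1\<cdots>y\<^sub>m)\<^sup>c\<close>, meaningful for positive coordinates.\<close>

definition prod_pow :: "complex \<Rightarrow> real^'m::finite \<Rightarrow> complex" where
  "prod_pow c y = exp (c * of_real (\<Sum>a\<in>UNIV. ln (y$a)))"

lemma prod_pow_nonzero [simp]: "prod_pow c y \<noteq> 0"
  by (simp add: prod_pow_def)

lemma continuous_on_prod_pow:
  assumes "\<forall>y\<in>A. \<forall>a. 0 < y$a"
  shows "continuous_on A (prod_pow c :: real^'m::finite \<Rightarrow> complex)"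
  unfolding prod_pow_def using assms by (intro continuous_intros) (auto, metis less_irrefl)

lemma theta_prod_pow:
  fixes y :: "real^'m::finite"
  assumes pos: "\<forall>a. 0 < y$a"
  shows "pdiff i (prod_pow c) y \<and> theta i (prod_pow c) y = c * prod_pow c y"
proof -
  define L where "L t = (\<Sum>a\<in>UNIV. ln ((y + t *\<^sub>R axis i 1)$a))" for t
  have "((\<lambda>t. \<Sum>a\<in>UNIV. ln (y$a + t * (if a = i then 1 else 0))) has_real_derivative
        (\<Sum>a\<in>UNIV. (if a = i then 1 else 0) / y$a)) (at 0)"
    by (rule derivative_eq_intros refl | use pos in force)+
  moreover have "(\<Sum>a\<in>UNIV. (if a = i then 1 else 0) / y$a) = 1 / y$i"
    by (simp add: if_distrib[of "\<lambda>x. x / _"] cong: if_cong)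
  ultimately have L: "(L has_real_derivative (1 / y$i)) (at 0)"
    unfolding L_def by (simp add: axis_def)
  have "((\<lambda>z. exp (c * z)) \<circ> (\<lambda>t. complex_of_real (L t)) has_vector_derivative
        (of_real (1 / y$i) * (c * exp (c * of_real (L 0))))) (at 0)"
    by (rule field_vector_diff_chain_at[OF has_vector_derivative_of_real[OF L]])
       (auto intro!: derivative_eq_intros)
  then have "((\<lambda>t. prod_pow c (y + t *\<^sub>R axis i 1)) has_vector_derivative
      (of_real (1 / y$i) * (c * prod_pow c y))) (at 0)"
    by (simp add: prod_pow_def L_def o_def)
  from pd_pdiffI[OF this] show ?thesis
    using pos[rule_format, of i] by (simp add: theta_def field_simps)
qed

lemma theta_prod_pow_mult_homog:
  fixes f :: "real^'m::finite option \<Rightarrow> complex"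
  assumes "\<forall>a. 0 < y$a" "pdiff (Some i) f (homog w y)"
  shows "pdiff i (\<lambda>y. prod_pow c y * f (homog w y)) y \<and>
    theta i (\<lambda>y. prod_pow c y * f (homog w y)) y
      = prod_pow c y * (c * f (homog w y) + theta (Some i) f (homog w y))"
  using theta_prod_pow[OF assms(1), of i c] theta_comp_homog[OF assms(2)]
    pd_mult[of i "prod_pow c" y "\<lambda>y. f (homog w y)"] theta_mult[of i "prod_pow c" y "\<lambda>y. f (homog w y)"]
  by (simp add: algebra_simps)

text \<open>The equations of \<open>E\<^sub>D\<close> (with all \<open>\<beta>\<^sub>i = k\<close>) at a point \<open>p\<close>, in terms of the value \<open>F0\<close>,
  the first \<open>\<vartheta>\<close>-derivatives \<open>T1 i\<close> and the second ones \<open>T2 i j = \<vartheta>\<^sub>i\<vartheta>\<^sub>j F\<close>.\<close>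

definition ED_jet ::
  "complex \<Rightarrow> complex \<Rightarrow> complex \<Rightarrow> real^'m::{finite,linorder} \<Rightarrow> complex
     \<Rightarrow> ('m \<Rightarrow> complex) \<Rightarrow> ('m \<Rightarrow> 'm \<Rightarrow> complex) \<Rightarrow> bool" where
  "ED_jet k \<alpha> \<gamma> p F0 T1 T2 \<longleftrightarrow>
    (\<forall>i j. i < j \<longrightarrow> of_real (p$i) * (T2 i j + k * T1 j) = of_real (p$j) * (T2 j i + k * T1 i)) \<and>
    (\<forall>i. (\<Sum>b\<in>UNIV. T2 i b) + (\<gamma> - 1) * T1 i =
          of_real (p$i) * ((\<Sum>b\<in>UNIV. T2 i b) + \<alpha> * T1 i + k * ((\<Sum>b\<in>UNIV. T1 b) + \<alpha> * F0)))"

lemma lauricella_ED_iff_ED_jet: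
  fixes F :: "real^'m::{finite,linorder} \<Rightarrow> complex"
  assumes "\<And>t i. t \<in> V \<Longrightarrow> pdiff i F t" "\<And>t i j. t \<in> V \<Longrightarrow> pdiff i (theta j F) t"
  shows "lauricella_ED \<alpha> (\<lambda>_. k) \<gamma> V F \<longleftrightarrow>
     (\<forall>t\<in>V. ED_jet k \<alpha> \<gamma> t (F t) (\<lambda>i. theta i F t) (\<lambda>i j. theta i (theta j F) t))"
proof -
  have theta_comb: "theta i (\<lambda>s. theta_sum F s + c * F s) t
      = (\<Sum>b\<in>UNIV. theta i (theta b F) t) + c * theta i F t" if t: "t \<in> V" for t i c
  proof -
    have "theta i (\<lambda>s. theta_sum F s + c * F s) t
        = theta i (\<lambda>s. \<Sum>b\<in>UNIV. theta b F s) t + theta i (\<lambda>s. c * F s) t"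
      unfolding theta_sum_def
      by (rule theta_add) (use assms t pd_sum[of UNIV i "\<lambda>b. theta b F" t] pd_cmult in blast)+
    then show ?thesis
      using theta_sum[of UNIV i "\<lambda>b. theta b F" t] theta_cmult[of i F t c] assms t by simp
  qed
  have pointwise: "((\<forall>i j. i < j \<longrightarrow> of_real (t $ i) * (theta i (theta j F) t + k * theta j F t)
                = of_real (t $ j) * (theta j (theta i F) t + k * theta i F t)) \<and>
            (\<forall>i. theta i (\<lambda>s. theta_sum F s + (\<gamma> - 1) * F s) t = of_real (t $ i) *
              (theta i (\<lambda>s. theta_sum F s + \<alpha> * F s) t + k * (theta_sum F t + \<alpha> * F t))))
        \<longleftrightarrow> ED_jet k \<alpha> \<gamma> t (F t) (\<lambda>i. theta i F t) (\<lambda>i j. theta i (theta j F) t)" if t: "t \<in> V" for t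
    unfolding ED_jet_def theta_comb[OF t] by (simp add: theta_sum_def algebra_simps)
  show ?thesis
    unfolding lauricella_ED_def using pointwise by blast
qed

text \<open>When \<open>T1\<close>, \<open>T2\<close> come from the gradient \<open>d\<close> and the Hessian \<open>h\<close>, the pointwise system
  reduces to the vanishing of the following residuals.\<close>

definition res_pair ::
  "complex \<Rightarrow> real^'m::finite \<Rightarrow> ('m \<Rightarrow> complex) \<Rightarrow> ('m \<Rightarrow> 'm \<Rightarrow> complex) \<Rightarrow> 'm \<Rightarrow> 'm \<Rightarrow> complex" where
  "res_pair k p d h i j = (of_real (p$i) - of_real (p$j)) * h i j + k * (d j - d i)"

definition res_single ::
  "complex \<Rightarrow> complex \<Rightarrow> complex \<Rightarrow> real^'m::finite \<Rightarrow> complex \<Rightarrow> ('m \<Rightarrow> complex)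
     \<Rightarrow> ('m \<Rightarrow> 'm \<Rightarrow> complex) \<Rightarrow> 'm \<Rightarrow> complex" where
  "res_single k \<alpha> \<gamma> p F0 d h a = (\<Sum>b\<in>UNIV. of_real (p$b) * h a b) + \<gamma> * d a
     - of_real (p$a) * ((\<Sum>b\<in>UNIV. of_real (p$b) * h a b) + (\<alpha> + 1) * d a)
     - k * ((\<Sum>b\<in>UNIV. of_real (p$b) * d b) + \<alpha> * F0)"

lemma ED_jet_pair_iff:
  fixes p :: "real^'m::finite"
  assumes "h i j = h j i" "i \<noteq> j"
  shows "(of_real (p$i) * (of_real (p$i) * ((if i = j then d j else 0) + of_real (p$j) * h i j) + k * (of_real (p$j) * d j))
        = of_real (p$j) * (of_real (p$j) * ((if j = i then d i else 0) + of_real (p$i) * h j i) + k * (of_real (p$i) * d i)))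
     \<longleftrightarrow> of_real (p$i) * of_real (p$j) * res_pair k p d h i j = 0"
  unfolding eq_iff_diff_eq_0[of "_ * _"] using assms by (simp add: res_pair_def algebra_simps)

lemma ED_jet_single_iff:
  fixes p :: "real^'m::finite"
  shows "((\<Sum>b\<in>UNIV. of_real (p$a) * ((if a = b then d b else 0) + of_real (p$b) * h a b)) + (\<gamma> - 1) * (of_real (p$a) * d a)
      = of_real (p$a) * ((\<Sum>b\<in>UNIV. of_real (p$a) * ((if a = b then d b else 0) + of_real (p$b) * h a b))
          + \<alpha> * (of_real (p$a) * d a) + k * ((\<Sum>b\<in>UNIV. of_real (p$b) * d b) + \<alpha> * F0)))
      \<longleftrightarrow> of_real (p$a) * res_single k \<alpha> \<gamma> p F0 d h a = 0"
proof -
  have "(\<Sum>b\<in>UNIV. of_real (p$a) * ((if a = b then d b else 0) + of_real (p$b) * h a b))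
      = of_real (p$a) * d a + of_real (p$a) * (\<Sum>b\<in>UNIV. of_real (p$b) * h a b)"
    by (simp add: distrib_left sum.distrib sum_distrib_left if_distrib[of "\<lambda>x. _ * x"] cong: if_cong)
  then show ?thesis
    unfolding eq_iff_diff_eq_0[of "_ + _"] by (simp add: res_single_def algebra_simps)
qed

lemma ED_jet_iff_residuals:
  fixes p :: "real^'m::{finite,linorder}"
  assumes "\<And>i j. h i j = h j i"
  shows "ED_jet k \<alpha> \<gamma> p F0 (\<lambda>i. of_real (p$i) * d i)
           (\<lambda>i j. of_real (p$i) * ((if i = j then d j else 0) + of_real (p$j) * h i j))
     \<longleftrightarrow> (\<forall>i j. i < j \<longrightarrow> of_real (p$i) * of_real (p$j) * res_pair k p d h i j = 0)
        \<and> (\<forall>a. of_real (p$a) * res_single k \<alpha> \<gamma> p F0 d h a = 0)"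
  unfolding ED_jet_def
  by (intro conj_cong iff_allI imp_cong[OF refl] ED_jet_pair_iff[OF assms] ED_jet_single_iff)
     (erule less_imp_neq)

text \<open>Under \<open>x = 1 - y\<close> the gradient changes sign and the Hessian is unchanged.\<close>

lemma res_pair_reflect: "res_pair k (1 - y) (\<lambda>i. - d i) h i j = - res_pair k y d h i j"
  by (simp add: res_pair_def algebra_simps)

lemma res_single_reflect:
  fixes y :: "real^'m::finite"
  assumes "\<gamma>' = (of_nat CARD('m) + 1) * k" "\<alpha> = - \<nu>" "\<gamma> = - \<nu> - k + 1"
  shows "res_single k \<alpha> \<gamma>' (1 - y) F0 (\<lambda>i. - d i) h a
    = res_single k \<alpha> \<gamma> y F0 d h a + (\<Sum>b\<in>UNIV. res_pair k y d h a b)"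
proof -
  define Sh where "Sh = (\<Sum>b\<in>UNIV. h a b)"
  define Syh where "Syh = (\<Sum>b\<in>UNIV. of_real (y$b) * h a b)"
  define Sd where "Sd = (\<Sum>b\<in>UNIV. d b)"
  define Syd where "Syd = (\<Sum>b\<in>UNIV. of_real (y$b) * d b)"
  have e1: "(\<Sum>b\<in>UNIV. of_real ((1 - y)$b) * h a b) = Sh - Syh"
    by (simp add: Sh_def Syh_def algebra_simps sum_subtractf)
  have e2: "(\<Sum>b\<in>UNIV. of_real ((1 - y)$b) * - d b) = Syd - Sd"
    by (simp add: Sd_def Syd_def algebra_simps sum_subtractf)
  have e3: "(\<Sum>b\<in>UNIV. res_pair k y d h a b) = of_real (y$a) * Sh - Syh + k * Sd - of_nat CARD('m) * k * d a"
    by (simp add: res_pair_def Sh_def Syh_def Sd_def algebra_simps sum_subtractf sum.distrib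
        sum_distrib_left sum_distrib_right)
  show ?thesis
    unfolding res_single_def e1 e2 e3 Syh_def[symmetric] Syd_def[symmetric] assms
    by (simp add: algebra_simps)
qed

text \<open>In the next two identities \<open>ph\<close>, \<open>Aa\<close>, \<open>Ab\<close>, \<open>Bab\<close> stand for \<open>\<phi>\<close>, \<open>\<vartheta>\<^sub>a\<phi>\<close>, \<open>\<vartheta>\<^sub>b\<phi>\<close>,
  \<open>\<vartheta>\<^sub>a\<vartheta>\<^sub>b\<phi>\<close>; \<open>Q\<close> for \<open>(z\<^sub>a + z\<^sub>b)/(z\<^sub>a - z\<^sub>b)\<close> (with \<open>b = n\<close> in the second one); \<open>E\<close> for
  \<open>(y\<^sub>1\<cdots>y\<^sub>m)\<^sup>\<sigma>\<close>; \<open>m\<close> for \<open>n - 1\<close>; and \<open>SA\<close>, \<open>SB\<close> for \<open>\<Sigma>\<^sub>b \<vartheta>\<^sub>b\<phi>\<close>, \<open>\<Sigma>\<^sub>b \<vartheta>\<^sub>a\<vartheta>\<^sub>b\<phi>\<close>,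
  which replace \<open>-\<vartheta>\<^sub>n\<phi>\<close>, \<open>-\<vartheta>\<^sub>a\<vartheta>\<^sub>n\<phi>\<close>.\<close>

lemma Delta_pair_identity:
  fixes E ph Aa Ab Bab Bba k \<sigma> ya yb Q :: complex
  assumes "Q * (ya - yb) = ya + yb" "Bba = Bab"
  shows "ya * (E * (\<sigma> * (\<sigma> * ph + Ab) + \<sigma> * Aa + Bab) + k * (E * (\<sigma> * ph + Ab)))
       - yb * (E * (\<sigma> * (\<sigma> * ph + Aa) + \<sigma> * Ab + Bba) + k * (E * (\<sigma> * ph + Aa)))
       = (ya - yb) * E * ((Bab - k / 2 * Q * (Aa - Ab) + (\<sigma> + k / 2) * (Aa + Ab)) + \<sigma> * (\<sigma> + k) * ph)"
  using assms by algebra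

lemma Delta_last_identity:
  fixes E ph Aa SA SB k \<sigma> ya Q m \<nu> :: complex
  assumes "Q * (ya - 1) = ya + 1" "\<nu> = \<sigma> * (m + 1)"
  shows "E * (m * \<sigma> * \<sigma> * ph + \<sigma> * SA + m * \<sigma> * Aa + SB) + (- \<nu> - k + 1 - 1) * (E * (\<sigma> * ph + Aa))
     - ya * (E * (m * \<sigma> * \<sigma> * ph + \<sigma> * SA + m * \<sigma> * Aa + SB) + (- \<nu>) * (E * (\<sigma> * ph + Aa))
             + k * (E * (m * \<sigma> * ph + SA) + (- \<nu>) * (E * ph)))
     = (ya - 1) * E * ((- SB - k / 2 * Q * (Aa - (- SA)) + (\<sigma> + k / 2) * (Aa + (- SA))) + \<sigma> * (\<sigma> + k) * ph)"
  using assms by algebra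

lemma continuous_zero_if_zero_on_ray:
  fixes F :: "real^'n::finite \<Rightarrow> complex"
  assumes U: "open U" and F: "continuous_on U F" and z: "z \<in> U" and \<delta>: "\<delta> > 0"
    and ray: "\<And>t. 0 < t \<Longrightarrow> t < \<delta> \<Longrightarrow> z + t *\<^sub>R v \<in> U \<Longrightarrow> F (z + t *\<^sub>R v) = 0"
  shows "F z = 0"
proof -
  have l: "((\<lambda>t. z + t *\<^sub>R v) \<longlongrightarrow> z) (at_right 0)"
    by (auto intro!: tendsto_eq_intros)
  have lim: "((\<lambda>t. F (z + t *\<^sub>R v)) \<longlongrightarrow> F z) (at_right 0)"
    using F U z by (intro isCont_tendsto_compose[OF _ l]) (simp add: continuous_on_eq_continuous_at)
  have "eventually (\<lambda>t. z + t *\<^sub>R v \<in> U) (at_right (0::real))"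
    using topological_tendstoD[OF l U z] .
  moreover have "eventually (\<lambda>t. 0 < t \<and> t < \<delta>) (at_right (0::real))"
    using \<delta> by (auto simp: eventually_at_right_field intro: exI[of _ \<delta>])
  ultimately have "eventually (\<lambda>t. F (z + t *\<^sub>R v) = 0) (at_right (0::real))"
    by eventually_elim (use ray in auto)
  then have "((\<lambda>t. F (z + t *\<^sub>R v)) \<longlongrightarrow> 0) (at_right 0)"
    by (rule tendsto_eventually)
  from tendsto_unique[OF _ lim this] show ?thesis by simp
qed

section \<open>Reduction of the eigenvalue problem\<close>

locale euler_reduction =
  fixes k \<nu> :: complex
    and U :: "(real, 'm::{finite,linorder} option) vec set"
    and \<phi> :: "(real, 'm option) vec \<Rightarrow> complex"
    and u :: "(real, 'm) vec \<Rightarrow> complex"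
  assumes U_open: "open U"
    and U_pos: "\<forall>z\<in>U. \<forall>i. 0 < z $ i"
    and \<phi>_smooth: "smooth_on U \<phi>"
    and euler: "\<forall>z\<in>U. theta_sum \<phi> z = 0"
    and repr: "\<forall>z\<in>U. \<phi> z =
        complex_of_real (\<Prod>a\<in>UNIV. ymap z $ a) powr (- \<nu> / of_nat CARD('m option)) * u (ymap z)"
begin

definition \<sigma> :: complex where "\<sigma> = \<nu> / of_nat CARD('m option)"

lemma coord_pos: "z \<in> U \<Longrightarrow> 0 < z $ i"
  using U_pos by blast

lemma pdiff_iter_pd_phi: "z \<in> U \<Longrightarrow> pdiff i (iter_pd is \<phi>) z"
  using \<phi>_smooth unfolding smooth_on_def pdiff_def by blast

lemma continuous_on_iter_pd_phi: "continuous_on U (iter_pd is \<phi>)"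
  using \<phi>_smooth unfolding smooth_on_def by blast

lemma pdiff_phi: "z \<in> U \<Longrightarrow> pdiff i \<phi> z"
  using pdiff_iter_pd_phi[of z i "[]"] by simp

lemma pdiff_pd_phi: "z \<in> U \<Longrightarrow> pdiff j (pd i \<phi>) z"
  using pdiff_iter_pd_phi[of z j "[i]"] by simp

lemma pdiff_theta_phi: "z \<in> U \<Longrightarrow> pdiff j (theta i \<phi>) z"
  by (rule theta_pdiff[OF pdiff_pd_phi])

lemma pd_pd_phi_commute:
  assumes z: "z \<in> U"
  shows "pd j (pd i \<phi>) z = pd i (pd j \<phi>) z"
proof (rule pd_pd_commute[OF U_open z])
  show "continuous_on U (pd j (pd i \<phi>))" using continuous_on_iter_pd_phi[of "[j, i]"] by simp
  show "continuous_on U (pd i (pd j \<phi>))" using continuous_on_iter_pd_phi[of "[i, j]"] by simp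
qed (simp add: pdiff_phi pdiff_pd_phi)

lemma theta_theta_phi_commute: "z \<in> U \<Longrightarrow> theta j (theta i \<phi>) z = theta i (theta j \<phi>) z"
  by (simp add: theta_theta[OF pdiff_pd_phi] pd_pd_phi_commute[of z i j] algebra_simps)

lemma continuous_on_theta_phi: "continuous_on U (theta i \<phi>)"
  using continuous_on_iter_pd_phi[of "[i]"] unfolding theta_def by (intro continuous_intros) simp

lemma continuous_on_theta_theta_phi: "continuous_on U (theta j (theta i \<phi>))"
proof -
  have "continuous_on U (\<lambda>z. of_real (z$j) * ((if j = i then pd i \<phi> z else 0) + of_real (z$i) * pd j (pd i \<phi>) z))"
    using continuous_on_iter_pd_phi[of "[i]"] continuous_on_iter_pd_phi[of "[j, i]"]
    by (cases "j = i") (auto intro!: continuous_intros)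
  then show ?thesis
    by (rule continuous_on_eq) (simp add: theta_theta[OF pdiff_pd_phi])
qed

lemma theta_None_phi: "z \<in> U \<Longrightarrow> theta None \<phi> z = - (\<Sum>b\<in>UNIV. theta (Some b) \<phi> z)"
  using euler sum_UNIV_option[of "\<lambda>j. theta j \<phi> z"] by (auto simp: theta_sum_def add_eq_0_iff)

lemma theta_theta_None_phi:
  assumes z: "z \<in> U"
  shows "theta (Some a) (theta None \<phi>) z = - (\<Sum>b\<in>UNIV. theta (Some a) (theta (Some b) \<phi>) z)"
proof -
  have "theta (Some a) (theta None \<phi>) z = theta (Some a) (\<lambda>q. (-1) * (\<Sum>b\<in>UNIV. theta (Some b) \<phi> q)) z"
    by (rule theta_cong_open[OF U_open z]) (simp add: theta_None_phi)
  also have "\<dots> = (-1) * theta (Some a) (\<lambda>q. \<Sum>b\<in>UNIV. theta (Some b) \<phi> q) z"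
    using pd_sum[of UNIV "Some a" "\<lambda>b. theta (Some b) \<phi>" z] pdiff_theta_phi[OF z]
    by (intro theta_cmult) blast
  also have "theta (Some a) (\<lambda>q. \<Sum>b\<in>UNIV. theta (Some b) \<phi> q) z
      = (\<Sum>b\<in>UNIV. theta (Some a) (theta (Some b) \<phi>) z)"
    by (rule theta_sum) (rule pdiff_theta_phi[OF z])
  finally show ?thesis by simp
qed

lemma ymap_pos: "z \<in> U \<Longrightarrow> 0 < ymap z $ a"
  using coord_pos[of z "Some a"] coord_pos[of z None] by simp

lemma ymap_nonzero: "z \<in> U \<Longrightarrow> complex_of_real (ymap z $ a) \<noteq> 0"
  using ymap_pos[of z a] by (simp del: ymap_nth)

lemma u_ymap: "z \<in> U \<Longrightarrow> u (ymap z) = prod_pow \<sigma> (ymap z) * \<phi> z"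
proof -
  assume z: "z \<in> U"
  define P where "P = (\<Prod>a\<in>UNIV. ymap z $ a)"
  have P: "P > 0"
    unfolding P_def using ymap_pos[OF z] by (simp add: prod_pos del: ymap_nth)
  have "ln P = (\<Sum>a\<in>UNIV. ln (ymap z $ a))"
    unfolding P_def using ln_prod[of UNIV "\<lambda>a. ymap z $ a"] ymap_pos[OF z] by (metis finite less_irrefl)
  moreover have "complex_of_real P powr (- \<nu> / of_nat CARD('m option)) = exp (- \<sigma> * of_real (ln P))"
    using P by (simp add: powr_def Ln_of_real \<sigma>_def)
  then have "\<phi> z = exp (- \<sigma> * of_real (ln P)) * u (ymap z)"
    using repr z by (simp add: P_def)
  ultimately show ?thesis
    by (simp add: prod_pow_def exp_minus field_simps)
qed

definition lift_nbhd :: "(real, 'm option) vec \<Rightarrow> (real, 'm) vec set" where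
  "lift_nbhd z = homog (z $ None) -` U"

lemma lift_nbhd:
  assumes z: "z \<in> U"
  shows "open (lift_nbhd z)" "ymap z \<in> lift_nbhd z"
    and "y \<in> lift_nbhd z \<Longrightarrow> homog (z $ None) y \<in> U \<and> ymap (homog (z $ None) y) = y"
proof -
  have w: "z $ None \<noteq> 0"
    using coord_pos[OF z, of None] by simp
  show "open (lift_nbhd z)"
    unfolding lift_nbhd_def using continuous_homog[of UNIV "z$None"]
    by (intro continuous_open_vimage[OF U_open]) (auto simp: continuous_on_eq_continuous_at)
  show "ymap z \<in> lift_nbhd z"
    using homog_ymap[OF w] z by (simp add: lift_nbhd_def)
  show "y \<in> lift_nbhd z \<Longrightarrow> homog (z $ None) y \<in> U \<and> ymap (homog (z $ None) y) = y"
    using w by (simp add: lift_nbhd_def)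
qed

lemma open_ymap_image: "open (ymap ` U)"
proof (rule openI)
  fix y assume "y \<in> ymap ` U"
  then obtain z where z: "z \<in> U" "y = ymap z" by blast
  then obtain e where "e > 0" "ball y e \<subseteq> lift_nbhd z"
    using lift_nbhd[OF z(1)] open_contains_ball by blast
  moreover have "lift_nbhd z \<subseteq> ymap ` U"
    using lift_nbhd(3)[OF z(1)] by (metis image_eqI subsetI)
  ultimately show "\<exists>e>0. ball y e \<subseteq> ymap ` U" by blast
qed

lemma u_local:
  assumes z: "z \<in> U" and y: "y \<in> lift_nbhd z"
  shows "u y = prod_pow \<sigma> y * \<phi> (homog (z $ None) y)"
  using u_ymap lift_nbhd(3)[OF z y] by metis

lemma lift_nbhd_pos: "z \<in> U \<Longrightarrow> y \<in> lift_nbhd z \<Longrightarrow> 0 < y $ a"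
  using ymap_pos lift_nbhd(3) by metis

definition u_jet0 :: "(real, 'm option) vec \<Rightarrow> complex" where
  "u_jet0 z = prod_pow \<sigma> (ymap z) * \<phi> z"

definition u_jet1 :: "(real, 'm option) vec \<Rightarrow> 'm \<Rightarrow> complex" where
  "u_jet1 z i = prod_pow \<sigma> (ymap z) * (\<sigma> * \<phi> z + theta (Some i) \<phi> z)"

definition u_jet2 :: "(real, 'm option) vec \<Rightarrow> 'm \<Rightarrow> 'm \<Rightarrow> complex" where
  "u_jet2 z i j = prod_pow \<sigma> (ymap z) * (\<sigma> * (\<sigma> * \<phi> z + theta (Some j) \<phi> z)
        + \<sigma> * theta (Some i) \<phi> z + theta (Some i) (theta (Some j) \<phi>) z)"

lemma theta_u:
  assumes z: "z \<in> U"
  shows "pdiff i u (ymap z) \<and> theta i u (ymap z) = u_jet1 z i"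
proof -
  note N = lift_nbhd[OF z]
  have "pdiff i (\<lambda>y. prod_pow \<sigma> y * \<phi> (homog (z $ None) y)) (ymap z) \<and>
      theta i (\<lambda>y. prod_pow \<sigma> y * \<phi> (homog (z $ None) y)) (ymap z) = u_jet1 z i"
    using theta_prod_pow_mult_homog[of "ymap z" i \<phi> "z $ None" \<sigma>] ymap_pos[OF z]
      homog_ymap[of z] coord_pos[OF z, of None] pdiff_phi[OF z]
    by (simp add: u_jet1_def del: ymap_nth)
  then show ?thesis
    using pd_pdiff_cong_open[OF N(1,2) u_local[OF z]] by (simp add: theta_def)
qed

lemma theta_theta_u:
  assumes z: "z \<in> U"
  shows "pdiff j (theta i u) (ymap z) \<and> theta j (theta i u) (ymap z) = u_jet2 z j i"
proof -
  note N = lift_nbhd[OF z]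
  define w where "w = z $ None"
  define g where "g q = \<sigma> * \<phi> q + theta (Some i) \<phi> q" for q
  have "theta i u y = prod_pow \<sigma> y * g (homog w y)" if y: "y \<in> lift_nbhd z" for y
  proof -
    have "homog w y \<in> U" "ymap (homog w y) = y" "homog w y $ None = w"
      using N(3)[OF y] by (simp_all add: w_def)
    then show ?thesis
      using theta_u[of "homog w y" i] by (simp add: u_jet1_def g_def del: ymap_nth)
  qed
  moreover have "pdiff (Some j) g z \<and> theta (Some j) g z
      = \<sigma> * theta (Some j) \<phi> z + theta (Some j) (theta (Some i) \<phi>) z"
    using pd_add[OF conjunct1[OF pd_cmult[OF pdiff_phi[OF z]]] pdiff_theta_phi[OF z]]
      theta_add[OF conjunct1[OF pd_cmult[OF pdiff_phi[OF z]]] pdiff_theta_phi[OF z]]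
      theta_cmult[OF pdiff_phi[OF z]]
    unfolding g_def[abs_def] by simp
  ultimately show ?thesis
    using theta_prod_pow_mult_homog[of "ymap z" j g w \<sigma>] ymap_pos[OF z]
      homog_ymap[of z] coord_pos[OF z, of None] pd_pdiff_cong_open[OF N(1,2), of "theta i u"]
    by (simp add: theta_def u_jet2_def g_def w_def algebra_simps del: ymap_nth)
qed

lemma pdiff_pd_u:
  assumes z: "z \<in> U"
  shows "pdiff j (pd i u) (ymap z)"
proof (rule pdiff_pd_if_pdiff_theta[of "lift_nbhd z"])
  show "\<forall>q\<in>lift_nbhd z. q $ i \<noteq> 0"
    using lift_nbhd_pos[OF z] by (metis less_irrefl)
qed (use lift_nbhd[OF z] theta_theta_u[OF z] in auto)

definition u_grad :: "(real, 'm option) vec \<Rightarrow> 'm \<Rightarrow> complex" where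
  "u_grad z i = u_jet1 z i / of_real (ymap z $ i)"

definition u_hess :: "(real, 'm option) vec \<Rightarrow> 'm \<Rightarrow> 'm \<Rightarrow> complex" where
  "u_hess z i j = (u_jet2 z i j / of_real (ymap z $ i) - (if i = j then u_grad z j else 0)) / of_real (ymap z $ j)"

lemma u_jet1_eq_grad:
  "z \<in> U \<Longrightarrow> u_jet1 z = (\<lambda>i. of_real (ymap z $ i) * u_grad z i)"
  using ymap_nonzero by (simp add: u_grad_def fun_eq_iff del: ymap_nth)

lemma u_jet2_eq_hess:
  "z \<in> U \<Longrightarrow> u_jet2 z = (\<lambda>i j. of_real (ymap z $ i) * ((if i = j then u_grad z j else 0) + of_real (ymap z $ j) * u_hess z i j))"
  using ymap_nonzero by (simp add: u_hess_def fun_eq_iff field_simps del: ymap_nth)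

lemma u_hess_commute: "z \<in> U \<Longrightarrow> u_hess z i j = u_hess z j i"
proof -
  assume z: "z \<in> U"
  have "u_jet2 z i j = u_jet2 z j i"
    using theta_theta_phi_commute[OF z, of "Some i" "Some j"] by (simp add: u_jet2_def algebra_simps)
  then show ?thesis
    unfolding u_hess_def using ymap_nonzero[OF z, of i] ymap_nonzero[OF z, of j]
    by (cases "i = j") (simp_all add: field_simps del: ymap_nth)
qed

lemma pd_u: "z \<in> U \<Longrightarrow> pd i u (ymap z) = u_grad z i"
proof -
  assume z: "z \<in> U"
  have "theta i u (ymap z) = of_real (ymap z $ i) * pd i u (ymap z)"
    by (simp add: theta_def del: ymap_nth)
  then show ?thesis
    using theta_u[OF z, of i] ymap_nonzero[OF z, of i] by (simp add: u_grad_def field_simps del: ymap_nth)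
qed

lemma pd_pd_u: "z \<in> U \<Longrightarrow> pd i (pd j u) (ymap z) = u_hess z i j"
proof -
  assume z: "z \<in> U"
  have "u_jet2 z i j = theta i (theta j u) (ymap z)"
    using theta_theta_u[OF z, of i j] by simp
  also have "\<dots> = of_real (ymap z $ i) * ((if i = j then pd j u (ymap z) else 0)
      + of_real (ymap z $ j) * pd i (pd j u) (ymap z))"
    by (rule theta_theta[OF pdiff_pd_u[OF z]])
  finally have "u_jet2 z i j = of_real (ymap z $ i) * ((if i = j then u_grad z j else 0)
      + of_real (ymap z $ j) * pd i (pd j u) (ymap z))"
    using pd_u[OF z] by simp
  then show ?thesis
    using ymap_nonzero[OF z, of i] ymap_nonzero[OF z, of j] by (simp add: u_hess_def field_simps del: ymap_nth)
qed

definition res_pair_at :: "(real, 'm option) vec \<Rightarrow> 'm \<Rightarrow> 'm \<Rightarrow> complex" where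
  "res_pair_at z i j = res_pair k (ymap z) (u_grad z) (u_hess z) i j"

definition res_single_at :: "(real, 'm option) vec \<Rightarrow> 'm \<Rightarrow> complex" where
  "res_single_at z a = res_single k (- \<nu>) (- \<nu> - k + 1) (ymap z) (u_jet0 z) (u_grad z) (u_hess z) a"

lemma res_pair_at_zero_all:
  assumes "z \<in> U" "\<forall>i j. i < j \<longrightarrow> res_pair_at z i j = 0"
  shows "res_pair_at z a b = 0"
proof -
  have antisym: "res_pair_at z j i = - res_pair_at z i j" for i j
    unfolding res_pair_at_def res_pair_def using u_hess_commute[OF assms(1), of i j] by (simp add: algebra_simps)
  have diag: "res_pair_at z i i = 0" for i
    by (simp add: res_pair_at_def res_pair_def)
  show ?thesis
    using assms(2) antisym[of a b] diag[of a] by (cases a b rule: linorder_cases) auto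
qed

lemma lauricella_y_iff_residuals:
  "lauricella_ED (- \<nu>) (\<lambda>_. k) (- \<nu> - k + 1) (ymap ` U) u \<longleftrightarrow>
   (\<forall>z\<in>U. (\<forall>i j. i < j \<longrightarrow> res_pair_at z i j = 0) \<and> (\<forall>a. res_single_at z a = 0))"
proof -
  have "lauricella_ED (- \<nu>) (\<lambda>_. k) (- \<nu> - k + 1) (ymap ` U) u \<longleftrightarrow>
     (\<forall>t\<in>ymap ` U. ED_jet k (- \<nu>) (- \<nu> - k + 1) t (u t) (\<lambda>i. theta i u t) (\<lambda>i j. theta i (theta j u) t))"
    by (rule lauricella_ED_iff_ED_jet) (auto dest: theta_u theta_theta_u)
  also have "\<dots> \<longleftrightarrow> (\<forall>z\<in>U. ED_jet k (- \<nu>) (- \<nu> - k + 1) (ymap z) (u_jet0 z) (u_jet1 z) (u_jet2 z))"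
  proof -
    have "u (ymap z) = u_jet0 z" "(\<lambda>i. theta i u (ymap z)) = u_jet1 z"
      "(\<lambda>i j. theta i (theta j u) (ymap z)) = u_jet2 z" if "z \<in> U" for z
      using u_ymap[OF that] theta_u[OF that] theta_theta_u[OF that] by (auto simp: u_jet0_def fun_eq_iff)
    then show ?thesis by auto
  qed
  also have "\<dots> \<longleftrightarrow> (\<forall>z\<in>U. (\<forall>i j. i < j \<longrightarrow> res_pair_at z i j = 0) \<and> (\<forall>a. res_single_at z a = 0))"
  proof (rule ball_cong[OF refl])
    fix z assume z: "z \<in> U"
    have "ED_jet k (- \<nu>) (- \<nu> - k + 1) (ymap z) (u_jet0 z) (u_jet1 z) (u_jet2 z) \<longleftrightarrow>
      (\<forall>i j. i < j \<longrightarrow> of_real (ymap z $ i) * of_real (ymap z $ j) * res_pair_at z i j = 0)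
        \<and> (\<forall>a. of_real (ymap z $ a) * res_single_at z a = 0)"
      unfolding u_jet1_eq_grad[OF z] u_jet2_eq_hess[OF z] res_pair_at_def res_single_at_def
      by (rule ED_jet_iff_residuals) (rule u_hess_commute[OF z])
    then show "ED_jet k (- \<nu>) (- \<nu> - k + 1) (ymap z) (u_jet0 z) (u_jet1 z) (u_jet2 z) \<longleftrightarrow>
      (\<forall>i j. i < j \<longrightarrow> res_pair_at z i j = 0) \<and> (\<forall>a. res_single_at z a = 0)"
      using ymap_nonzero[OF z] by (simp del: ymap_nth)
  qed
  finally show ?thesis .
qed

lemma pd_u_reflect:
  assumes "1 - x \<in> ymap ` U"
  shows "pdiff i (\<lambda>x. u (1 - x)) x \<and> pd i (\<lambda>x. u (1 - x)) x = - pd i u (1 - x)"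
proof (rule pd_comp_reflect)
  from assms obtain z where "z \<in> U" "1 - x = ymap z" by blast
  then show "pdiff i u (1 - x)" using theta_u by simp
qed

lemma pd_pd_u_reflect:
  assumes x: "1 - x \<in> ymap ` U"
  shows "pdiff j (pd i (\<lambda>x. u (1 - x))) x \<and> pd j (pd i (\<lambda>x. u (1 - x))) x = pd j (pd i u) (1 - x)"
proof -
  define W where "W = (\<lambda>x. 1 - x) -` (ymap ` U)"
  have W: "open W"
    unfolding W_def by (rule continuous_open_vimage[OF open_ymap_image]) (auto intro!: continuous_intros)
  have xW: "x \<in> W" using x by (simp add: W_def)
  have eq: "pd i (\<lambda>x. u (1 - x)) q = (- 1) * pd i u (1 - q)" if "q \<in> W" for q
    using pd_u_reflect that by (simp add: W_def)
  have "pdiff j (\<lambda>x. (- 1) * pd i u (1 - x)) x \<and> pd j (\<lambda>x. (- 1) * pd i u (1 - x)) x = pd j (pd i u) (1 - x)"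
  proof -
    obtain z where "z \<in> U" "1 - x = ymap z" using x by blast
    then have "pdiff j (pd i u) (1 - x)" using pdiff_pd_u by simp
    then have "pdiff j (\<lambda>x. pd i u (1 - x)) x \<and> pd j (\<lambda>x. pd i u (1 - x)) x = - pd j (pd i u) (1 - x)"
      by (rule pd_comp_reflect)
    then show ?thesis using pd_cmult[of j "\<lambda>x. pd i u (1 - x)" x "- 1"] by simp
  qed
  with pd_pdiff_cong_open[OF W xW eq, where i=j] show ?thesis
    by simp
qed

lemma reflected_u_jets:
  assumes z: "z \<in> U"
  shows "u (1 - (1 - ymap z)) = u_jet0 z"
    and "(\<lambda>i. theta i (\<lambda>x. u (1 - x)) (1 - ymap z)) = (\<lambda>i. of_real ((1 - ymap z) $ i) * (- u_grad z i))"
    and "(\<lambda>i j. theta i (theta j (\<lambda>x. u (1 - x))) (1 - ymap z)) =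
      (\<lambda>i j. of_real ((1 - ymap z) $ i) * ((if i = j then - u_grad z j else 0)
        + of_real ((1 - ymap z) $ j) * u_hess z i j))"
proof -
  have x: "1 - (1 - ymap z) \<in> ymap ` U" using z by simp
  show "u (1 - (1 - ymap z)) = u_jet0 z"
    using u_ymap[OF z] by (simp add: u_jet0_def)
  show "(\<lambda>i. theta i (\<lambda>x. u (1 - x)) (1 - ymap z)) = (\<lambda>i. of_real ((1 - ymap z) $ i) * (- u_grad z i))"
    using pd_u_reflect[OF x] pd_u[OF z] by (simp add: theta_def fun_eq_iff)
  show "(\<lambda>i j. theta i (theta j (\<lambda>x. u (1 - x))) (1 - ymap z)) =
      (\<lambda>i j. of_real ((1 - ymap z) $ i) * ((if i = j then - u_grad z j else 0)
        + of_real ((1 - ymap z) $ j) * u_hess z i j))"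
    using theta_theta[OF conjunct1[OF pd_pd_u_reflect[OF x]]] pd_pd_u_reflect[OF x]
      pd_u_reflect[OF x] pd_u[OF z] pd_pd_u[OF z]
    by (simp add: fun_eq_iff)
qed

lemma lauricella_x_iff_residuals:
  "lauricella_ED (- \<nu>) (\<lambda>_. k) (of_nat CARD('m option) * k) ((\<lambda>y. 1 - y) ` ymap ` U) (\<lambda>x. u (1 - x)) \<longleftrightarrow>
   (\<forall>z\<in>U. (\<forall>i j. i < j \<longrightarrow> of_real ((1 - ymap z)$i) * of_real ((1 - ymap z)$j) * res_pair_at z i j = 0)
        \<and> (\<forall>a. of_real ((1 - ymap z)$a) * (res_single_at z a + (\<Sum>b\<in>UNIV. res_pair_at z a b)) = 0))"
  (is "_ \<longleftrightarrow> ?R")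
proof -
  let ?\<gamma> = "of_nat CARD('m option) * k"
  let ?x = "\<lambda>z. 1 - ymap z"
  have "lauricella_ED (- \<nu>) (\<lambda>_. k) ?\<gamma> ((\<lambda>y. 1 - y) ` ymap ` U) (\<lambda>x. u (1 - x)) \<longleftrightarrow>
     (\<forall>t\<in>(\<lambda>y. 1 - y) ` ymap ` U. ED_jet k (- \<nu>) ?\<gamma> t (u (1 - t)) (\<lambda>i. theta i (\<lambda>x. u (1 - x)) t)
        (\<lambda>i j. theta i (theta j (\<lambda>x. u (1 - x))) t))"
  proof (rule lauricella_ED_iff_ED_jet)
    fix t i j assume "t \<in> (\<lambda>y. 1 - y) ` ymap ` U"
    then have "1 - t \<in> ymap ` U" by auto
    then show "pdiff i (\<lambda>x. u (1 - x)) t" "pdiff i (theta j (\<lambda>x. u (1 - x))) t"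
      using pd_u_reflect pd_pd_u_reflect theta_pdiff by blast+
  qed
  also have "\<dots> \<longleftrightarrow> (\<forall>z\<in>U. ED_jet k (- \<nu>) ?\<gamma> (?x z) (u_jet0 z) (\<lambda>i. of_real (?x z $ i) * (- u_grad z i))
       (\<lambda>i j. of_real (?x z $ i) * ((if i = j then - u_grad z j else 0) + of_real (?x z $ j) * u_hess z i j)))"
    using reflected_u_jets by auto
  also have "\<dots> \<longleftrightarrow> ?R"
  proof (rule ball_cong[OF refl])
    fix z assume z: "z \<in> U"
    have "?\<gamma> = (of_nat CARD('m) + 1) * k"
      by (simp add: card_UNIV_option_Suc)
    note reflect = res_pair_reflect res_single_reflect[OF this refl refl]
    show "ED_jet k (- \<nu>) ?\<gamma> (?x z) (u_jet0 z) (\<lambda>i. of_real (?x z $ i) * (- u_grad z i))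
       (\<lambda>i j. of_real (?x z $ i) * ((if i = j then - u_grad z j else 0) + of_real (?x z $ j) * u_hess z i j))
      \<longleftrightarrow> (\<forall>i j. i < j \<longrightarrow> of_real (?x z $ i) * of_real (?x z $ j) * res_pair_at z i j = 0)
        \<and> (\<forall>a. of_real (?x z $ a) * (res_single_at z a + (\<Sum>b\<in>UNIV. res_pair_at z a b)) = 0)"
      unfolding ED_jet_iff_residuals[OF u_hess_commute[OF z]] reflect res_pair_at_def res_single_at_def
      by (simp del: ymap_nth)
  qed
  finally show ?thesis .
qed

lemma eigenvalue_eq:
  "\<nu> * (\<nu> + of_nat CARD('m option) * k) / (of_nat CARD('m option))\<^sup>2 = \<sigma> * (\<sigma> + k)"
  by (simp add: \<sigma>_def field_simps power2_eq_square del: of_nat_Suc)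

lemma Delta_pair_eigen_iff:
  assumes z: "z \<in> U" and ab: "a \<noteq> b" and zab: "z $ Some a \<noteq> z $ Some b"
  shows "Delta k \<nu> (Some a) (Some b) \<phi> z
      = - (\<nu> * (\<nu> + of_nat CARD('m option) * k) / (of_nat CARD('m option))\<^sup>2) * \<phi> z
     \<longleftrightarrow> res_pair_at z a b = 0"
proof -
  define ya where "ya = complex_of_real (ymap z $ a)"
  define yb where "yb = complex_of_real (ymap z $ b)"
  define Q where "Q = complex_of_real (z $ Some a + z $ Some b) / complex_of_real (z $ Some a - z $ Some b)"
  define D where "D = Delta k \<nu> (Some a) (Some b) \<phi> z"
  have zn: "z $ None \<noteq> 0"
    using coord_pos[OF z, of None] by simp
  have hQ: "Q * (ya - yb) = ya + yb" and yab: "ya - yb \<noteq> 0"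
    using zab zn by (simp_all add: Q_def ya_def yb_def field_simps)
  have D: "D = theta (Some a) (theta (Some b) \<phi>) z - k / 2 * Q * (theta (Some a) \<phi> z - theta (Some b) \<phi> z)
      + (\<sigma> + k / 2) * (theta (Some a) \<phi> z + theta (Some b) \<phi> z)"
    by (simp add: D_def Delta_def Q_def \<sigma>_def)
  have factor: "ya * (u_jet2 z a b + k * u_jet1 z b) - yb * (u_jet2 z b a + k * u_jet1 z a)
      = (ya - yb) * prod_pow \<sigma> (ymap z) * (D + \<sigma> * (\<sigma> + k) * \<phi> z)"
    unfolding u_jet1_def u_jet2_def D
    by (rule Delta_pair_identity[OF hQ]) (rule theta_theta_phi_commute[OF z])
  have residual: "ya * (u_jet2 z a b + k * u_jet1 z b) = yb * (u_jet2 z b a + k * u_jet1 z a)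
      \<longleftrightarrow> ya * yb * res_pair_at z a b = 0"
    unfolding u_jet1_eq_grad[OF z] u_jet2_eq_hess[OF z] ya_def yb_def res_pair_at_def
    using ED_jet_pair_iff[where h="u_hess z" and p="ymap z" and d="u_grad z" and k=k and i=a and j=b,
        OF u_hess_commute[OF z] ab]
    by (simp del: ymap_nth)
  have "D = - (\<nu> * (\<nu> + of_nat CARD('m option) * k) / (of_nat CARD('m option))\<^sup>2) * \<phi> z
      \<longleftrightarrow> D + \<sigma> * (\<sigma> + k) * \<phi> z = 0"
    unfolding eigenvalue_eq by (simp only: mult_minus_left eq_neg_iff_add_eq_0)
  also have "\<dots> \<longleftrightarrow> ya * (u_jet2 z a b + k * u_jet1 z b) - yb * (u_jet2 z b a + k * u_jet1 z a) = 0"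
    unfolding factor using yab by simp
  also have "\<dots> \<longleftrightarrow> ya * yb * res_pair_at z a b = 0"
    using residual by (simp add: eq_iff_diff_eq_0[symmetric])
  also have "\<dots> \<longleftrightarrow> res_pair_at z a b = 0"
    using ymap_nonzero[OF z, of a] ymap_nonzero[OF z, of b] by (simp add: ya_def yb_def del: ymap_nth)
  finally show ?thesis by (simp add: D_def)
qed

lemma Delta_last_eigen_iff:
  assumes z: "z \<in> U" and za: "z $ Some a \<noteq> z $ None"
  shows "Delta k \<nu> (Some a) None \<phi> z
      = - (\<nu> * (\<nu> + of_nat CARD('m option) * k) / (of_nat CARD('m option))\<^sup>2) * \<phi> z
     \<longleftrightarrow> res_single_at z a = 0"
proof -
  define ya where "ya = complex_of_real (ymap z $ a)"
  define Q where "Q = complex_of_real (z $ Some a + z $ None) / complex_of_real (z $ Some a - z $ None)"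
  define D where "D = Delta k \<nu> (Some a) None \<phi> z"
  define SA where "SA = (\<Sum>b\<in>UNIV. theta (Some b) \<phi> z)"
  define SB where "SB = (\<Sum>b\<in>UNIV. theta (Some a) (theta (Some b) \<phi>) z)"
  define m where "m = (of_nat CARD('m) :: complex)"
  define E where "E = prod_pow \<sigma> (ymap z)"
  have zn: "z $ None \<noteq> 0"
    using coord_pos[OF z, of None] by simp
  have hQ: "Q * (ya - 1) = ya + 1" and ya1: "ya - 1 \<noteq> 0"
    using za zn by (simp_all add: Q_def ya_def field_simps)
  have "m + 1 = of_nat (Suc CARD('m))"
    by (simp add: m_def)
  then have hnu: "\<nu> = \<sigma> * (m + 1)"
    by (simp add: \<sigma>_def card_UNIV_option_Suc del: of_nat_Suc)
  have D: "D = - SB - k / 2 * Q * (theta (Some a) \<phi> z - - SA) + (\<sigma> + k / 2) * (theta (Some a) \<phi> z + - SA)"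
    by (simp add: D_def Delta_def Q_def \<sigma>_def theta_None_phi[OF z] theta_theta_None_phi[OF z] SA_def SB_def)
  have sum_jet2: "(\<Sum>b\<in>UNIV. u_jet2 z a b) = E * (m * \<sigma> * \<sigma> * \<phi> z + \<sigma> * SA + m * \<sigma> * theta (Some a) \<phi> z + SB)"
    by (simp add: u_jet2_def E_def SA_def SB_def m_def sum.distrib sum_distrib_left algebra_simps)
  have sum_jet1: "(\<Sum>b\<in>UNIV. u_jet1 z b) = E * (m * \<sigma> * \<phi> z + SA)"
    by (simp add: u_jet1_def E_def SA_def m_def sum.distrib sum_distrib_left algebra_simps)
  have factor: "(\<Sum>b\<in>UNIV. u_jet2 z a b) + (- \<nu> - k + 1 - 1) * u_jet1 z a
      - ya * ((\<Sum>b\<in>UNIV. u_jet2 z a b) + (- \<nu>) * u_jet1 z a + k * ((\<Sum>b\<in>UNIV. u_jet1 z b) + (- \<nu>) * u_jet0 z))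
      = (ya - 1) * E * (D + \<sigma> * (\<sigma> + k) * \<phi> z)"
    unfolding sum_jet2 sum_jet1 D unfolding u_jet1_def u_jet0_def E_def[symmetric]
    by (rule Delta_last_identity[OF hQ hnu])
  have residual: "(\<Sum>b\<in>UNIV. u_jet2 z a b) + (- \<nu> - k + 1 - 1) * u_jet1 z a
      = ya * ((\<Sum>b\<in>UNIV. u_jet2 z a b) + (- \<nu>) * u_jet1 z a + k * ((\<Sum>b\<in>UNIV. u_jet1 z b) + (- \<nu>) * u_jet0 z))
      \<longleftrightarrow> ya * res_single_at z a = 0"
    unfolding u_jet1_eq_grad[OF z] u_jet2_eq_hess[OF z] ya_def res_single_at_def
    by (rule ED_jet_single_iff)
  have "D = - (\<nu> * (\<nu> + of_nat CARD('m option) * k) / (of_nat CARD('m option))\<^sup>2) * \<phi> z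
      \<longleftrightarrow> D + \<sigma> * (\<sigma> + k) * \<phi> z = 0"
    unfolding eigenvalue_eq by (simp only: mult_minus_left eq_neg_iff_add_eq_0)
  also have "\<dots> \<longleftrightarrow> (\<Sum>b\<in>UNIV. u_jet2 z a b) + (- \<nu> - k + 1 - 1) * u_jet1 z a
      - ya * ((\<Sum>b\<in>UNIV. u_jet2 z a b) + (- \<nu>) * u_jet1 z a + k * ((\<Sum>b\<in>UNIV. u_jet1 z b) + (- \<nu>) * u_jet0 z)) = 0"
    unfolding factor using ya1 by (simp add: E_def)
  also have "\<dots> \<longleftrightarrow> ya * res_single_at z a = 0"
    using residual by (simp add: eq_iff_diff_eq_0[symmetric])
  also have "\<dots> \<longleftrightarrow> res_single_at z a = 0"
    using ymap_nonzero[OF z, of a] by (simp add: ya_def del: ymap_nth)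
  finally show ?thesis by (simp add: D_def)
qed

lemma continuous_on_u_jets:
  "continuous_on U u_jet0" "continuous_on U (\<lambda>z. u_jet1 z i)" "continuous_on U (\<lambda>z. u_jet2 z i j)"
proof -
  have ymap: "continuous_on U ymap"
    unfolding ymap_def by (intro continuous_intros) (metis coord_pos less_irrefl)
  have "continuous_on (ymap ` U) (prod_pow \<sigma>)"
    by (rule continuous_on_prod_pow) (use ymap_pos in blast)
  then have E: "continuous_on U (\<lambda>z. prod_pow \<sigma> (ymap z))"
    by (rule continuous_on_compose2[OF _ ymap]) auto
  note phi = continuous_on_iter_pd_phi[of "[]", simplified]
  show "continuous_on U u_jet0" "continuous_on U (\<lambda>z. u_jet1 z i)" "continuous_on U (\<lambda>z. u_jet2 z i j)"
    unfolding u_jet0_def u_jet1_def u_jet2_def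
    by (intro continuous_intros E phi continuous_on_theta_phi continuous_on_theta_theta_phi)+
qed

lemma continuous_on_ymap_coord: "continuous_on U (\<lambda>z. complex_of_real (ymap z $ i))"
  unfolding ymap_nth by (intro continuous_intros) (metis coord_pos less_irrefl)

lemma continuous_on_u_grad: "continuous_on U (\<lambda>z. u_grad z i)"
  unfolding u_grad_def using ymap_nonzero
  by (intro continuous_intros continuous_on_u_jets continuous_on_ymap_coord) auto

lemma continuous_on_u_hess: "continuous_on U (\<lambda>z. u_hess z i j)"
  unfolding u_hess_def using ymap_nonzero
  by (cases "i = j") (auto intro!: continuous_intros continuous_on_u_jets continuous_on_ymap_coord
      continuous_on_u_grad simp del: ymap_nth)

lemma continuous_on_res_pair_at: "continuous_on U (\<lambda>z. res_pair_at z i j)"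
  unfolding res_pair_at_def res_pair_def
  by (intro continuous_intros continuous_on_ymap_coord continuous_on_u_hess continuous_on_u_grad)

lemma continuous_on_res_single_at: "continuous_on U (\<lambda>z. res_single_at z a)"
  unfolding res_single_at_def res_single_def
  by (intro continuous_intros continuous_on_ymap_coord continuous_on_u_hess continuous_on_u_grad
      continuous_on_u_jets)

definition Delta_eigen :: bool where
  "Delta_eigen \<longleftrightarrow> (\<forall>i j. idx_less i j \<longrightarrow> (\<forall>z\<in>U. z $ i \<noteq> z $ j \<longrightarrow>
      Delta k \<nu> i j \<phi> z = - (\<nu> * (\<nu> + of_nat CARD('m option) * k) / (of_nat CARD('m option))\<^sup>2) * \<phi> z))"

text \<open>Where \<open>z\<^sub>a = z\<^sub>b\<close> (resp. \<open>z\<^sub>a = z\<^sub>n\<close>) the eigenvalue equation is not imposed; there the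
  residual vanishes as a limit along the ray increasing \<open>z\<^sub>a\<close>.\<close>

lemma res_pair_at_zero_if_Delta_eigen:
  assumes H: Delta_eigen and z: "z \<in> U" and ab: "a < b"
  shows "res_pair_at z a b = 0"
proof (cases "z $ Some a = z $ Some b")
  case False
  then show ?thesis
    using H[unfolded Delta_eigen_def] z ab Delta_pair_eigen_iff[OF z _ False] by (auto simp: idx_less_def)
next
  case True
  show ?thesis
  proof (rule continuous_zero_if_zero_on_ray[OF U_open continuous_on_res_pair_at z zero_less_one])
    fix t :: real assume t: "0 < t" "t < 1" and z': "z + t *\<^sub>R axis (Some a) 1 \<in> U"
    have ne: "(z + t *\<^sub>R axis (Some a) 1) $ Some a \<noteq> (z + t *\<^sub>R axis (Some a) 1) $ Some b"
      using True t ab by (simp add: axis_def)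
    show "res_pair_at (z + t *\<^sub>R axis (Some a) 1) a b = 0"
      using H[unfolded Delta_eigen_def] z' ab Delta_pair_eigen_iff[OF z' _ ne] ne by (auto simp: idx_less_def)
  qed
qed

lemma res_single_at_zero_if_Delta_eigen:
  assumes H: Delta_eigen and z: "z \<in> U"
  shows "res_single_at z a = 0"
proof (cases "z $ Some a = z $ None")
  case False
  then show ?thesis
    using H[unfolded Delta_eigen_def] z Delta_last_eigen_iff[OF z False] by (auto simp: idx_less_def)
next
  case True
  show ?thesis
  proof (rule continuous_zero_if_zero_on_ray[OF U_open continuous_on_res_single_at z zero_less_one])
    fix t :: real assume t: "0 < t" "t < 1" and z': "z + t *\<^sub>R axis (Some a) 1 \<in> U"
    have ne: "(z + t *\<^sub>R axis (Some a) 1) $ Some a \<noteq> (z + t *\<^sub>R axis (Some a) 1) $ None"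
      using True t by (simp add: axis_def)
    show "res_single_at (z + t *\<^sub>R axis (Some a) 1) a = 0"
      using H[unfolded Delta_eigen_def] z' Delta_last_eigen_iff[OF z' ne] ne by (auto simp: idx_less_def)
  qed
qed

lemma Delta_eigen_iff_lauricella:
  "Delta_eigen \<longleftrightarrow> lauricella_ED (- \<nu>) (\<lambda>_. k) (- \<nu> - k + 1) (ymap ` U) u"
proof
  assume Delta_eigen
  then show "lauricella_ED (- \<nu>) (\<lambda>_. k) (- \<nu> - k + 1) (ymap ` U) u"
    unfolding lauricella_y_iff_residuals
    using res_pair_at_zero_if_Delta_eigen res_single_at_zero_if_Delta_eigen by blast
next
  assume "lauricella_ED (- \<nu>) (\<lambda>_. k) (- \<nu> - k + 1) (ymap ` U) u"
  then have pair: "\<And>z a b. z \<in> U \<Longrightarrow> a < b \<Longrightarrow> res_pair_at z a b = 0"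
    and single: "\<And>z a. z \<in> U \<Longrightarrow> res_single_at z a = 0"
    unfolding lauricella_y_iff_residuals by blast+
  show Delta_eigen
    unfolding Delta_eigen_def
  proof (intro allI impI ballI)
    fix i j z assume ij: "idx_less i j" and z: "z \<in> U" and ne: "z $ i \<noteq> z $ j"
    show "Delta k \<nu> i j \<phi> z = - (\<nu> * (\<nu> + of_nat CARD('m option) * k) / (of_nat CARD('m option))\<^sup>2) * \<phi> z"
    proof (cases i)
      case None
      with ij show ?thesis by (simp add: idx_less_def)
    next
      case (Some a)
      show ?thesis
      proof (cases j)
        case None
        with Some ne Delta_last_eigen_iff[OF z] single[OF z] show ?thesis by simp
      next
        case (Some b)
        with \<open>i = Some a\<close> ij have "a < b" by (simp add: idx_less_def)
        with \<open>i = Some a\<close> Some ne Delta_pair_eigen_iff[OF z, of a b] pair[OF z] show ?thesis by simp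
      qed
    qed
  qed
qed

text \<open>Where some \<open>x\<^sub>c = 1 - z\<^sub>c/z\<^sub>n\<close> vanishes, the reflected system carries no information;
  there the residuals vanish as limits along the ray increasing \<open>z\<^sub>n\<close>, which makes
  \<open>x\<^sub>c \<noteq> 0\<close> for \<open>0 < t < margin z c\<close>.\<close>

definition margin :: "(real, 'm option) vec \<Rightarrow> 'm \<Rightarrow> real" where
  "margin z c = (if z $ Some c \<le> z $ None then 1 else z $ Some c - z $ None)"

lemma reflected_coord_nonzero:
  assumes "z + t *\<^sub>R axis None 1 \<in> U" "0 < t" "t < margin z c"
  shows "complex_of_real ((1 - ymap (z + t *\<^sub>R axis None 1)) $ c) \<noteq> 0"
proof -
  have "(z + t *\<^sub>R axis None 1) $ Some c \<noteq> (z + t *\<^sub>R axis None 1) $ None"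
    using assms(2,3) by (auto simp: margin_def axis_def split: if_splits)
  then show ?thesis
    using coord_pos[OF assms(1), of None] by (auto simp: field_simps simp del: vector_add_component)
qed

lemma res_pair_at_zero_if_lauricella_x:
  assumes X: "lauricella_ED (- \<nu>) (\<lambda>_. k) (of_nat CARD('m option) * k) ((\<lambda>y. 1 - y) ` ymap ` U) (\<lambda>x. u (1 - x))"
    and z: "z \<in> U"
  shows "res_pair_at z a b = 0"
proof -
  from X have X_pair: "\<And>z a b. z \<in> U \<Longrightarrow> a < b \<Longrightarrow>
      of_real ((1 - ymap z)$a) * of_real ((1 - ymap z)$b) * res_pair_at z a b = 0"
    unfolding lauricella_x_iff_residuals by blast
  have "res_pair_at z a b = 0" if ab: "a < b" for a b
  proof (rule continuous_zero_if_zero_on_ray[OF U_open continuous_on_res_pair_at z])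
    show "0 < min (margin z a) (margin z b)"
      by (simp add: margin_def)
    fix t :: real assume t: "0 < t" "t < min (margin z a) (margin z b)" and z': "z + t *\<^sub>R axis None 1 \<in> U"
    then show "res_pair_at (z + t *\<^sub>R axis None 1) a b = 0"
      using reflected_coord_nonzero[OF z', of a] reflected_coord_nonzero[OF z', of b] X_pair[OF z' ab] t
      by (simp only: mult_eq_0_iff min_less_iff_conj) blast
  qed
  then show ?thesis
    using res_pair_at_zero_all[OF z] by blast
qed

lemma res_single_at_zero_if_lauricella_x:
  assumes X: "lauricella_ED (- \<nu>) (\<lambda>_. k) (of_nat CARD('m option) * k) ((\<lambda>y. 1 - y) ` ymap ` U) (\<lambda>x. u (1 - x))"
    and z: "z \<in> U"
  shows "res_single_at z a = 0"
proof (rule continuous_zero_if_zero_on_ray[OF U_open continuous_on_res_single_at z])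
  show "0 < margin z a"
    by (simp add: margin_def)
  fix t :: real assume t: "0 < t" "t < margin z a" and z': "z + t *\<^sub>R axis None 1 \<in> U"
  have "(\<Sum>b\<in>UNIV. res_pair_at (z + t *\<^sub>R axis None 1) a b) = 0"
    using res_pair_at_zero_if_lauricella_x[OF X z'] by simp
  moreover have "of_real ((1 - ymap (z + t *\<^sub>R axis None 1))$a)
      * (res_single_at (z + t *\<^sub>R axis None 1) a + (\<Sum>b\<in>UNIV. res_pair_at (z + t *\<^sub>R axis None 1) a b)) = 0"
    using X z' unfolding lauricella_x_iff_residuals by blast
  ultimately show "res_single_at (z + t *\<^sub>R axis None 1) a = 0"
    using reflected_coord_nonzero[OF z' t] by (simp only: mult_eq_0_iff add_0_right) blast
qed

lemma lauricella_iff_reflected: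
  "lauricella_ED (- \<nu>) (\<lambda>_. k) (- \<nu> - k + 1) (ymap ` U) u
   \<longleftrightarrow> lauricella_ED (- \<nu>) (\<lambda>_. k) (of_nat CARD('m option) * k) ((\<lambda>y. 1 - y) ` ymap ` U) (\<lambda>x. u (1 - x))"
proof
  assume "lauricella_ED (- \<nu>) (\<lambda>_. k) (- \<nu> - k + 1) (ymap ` U) u"
  then have "\<And>z a b. z \<in> U \<Longrightarrow> res_pair_at z a b = 0" "\<And>z a. z \<in> U \<Longrightarrow> res_single_at z a = 0"
    unfolding lauricella_y_iff_residuals using res_pair_at_zero_all by blast+
  then show "lauricella_ED (- \<nu>) (\<lambda>_. k) (of_nat CARD('m option) * k) ((\<lambda>y. 1 - y) ` ymap ` U) (\<lambda>x. u (1 - x))"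
    unfolding lauricella_x_iff_residuals by simp
next
  assume "lauricella_ED (- \<nu>) (\<lambda>_. k) (of_nat CARD('m option) * k) ((\<lambda>y. 1 - y) ` ymap ` U) (\<lambda>x. u (1 - x))"
  then show "lauricella_ED (- \<nu>) (\<lambda>_. k) (- \<nu> - k + 1) (ymap ` U) u"
    unfolding lauricella_y_iff_residuals
    using res_pair_at_zero_if_lauricella_x res_single_at_zero_if_lauricella_x by blast
qed

end

theorem mainTheorem5:
  fixes k \<nu> :: complex
    and U :: "(real, 'm::{finite,linorder} option) vec set"
    and \<phi> :: "(real, 'm option) vec \<Rightarrow> complex"
    and u :: "(real, 'm) vec \<Rightarrow> complex"
  assumes U_open: "open U"
    and U_pos: "\<forall>z\<in>U. \<forall>i. 0 < z $ i"
    and \<phi>_smooth: "smooth_on U \<phi>"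
    and euler: "\<forall>z\<in>U. theta_sum \<phi> z = 0"
    and repr: "\<forall>z\<in>U. \<phi> z =
        complex_of_real (\<Prod>a\<in>UNIV. ymap z $ a) powr (- \<nu> / of_nat CARD('m option)) * u (ymap z)"
  shows "((\<forall>i j. idx_less i j \<longrightarrow> (\<forall>z\<in>U. z $ i \<noteq> z $ j \<longrightarrow>
              Delta k \<nu> i j \<phi> z
              = - (\<nu> * (\<nu> + of_nat CARD('m option) * k) / (of_nat CARD('m option))\<^sup>2) * \<phi> z))
          \<longleftrightarrow> lauricella_ED (- \<nu>) (\<lambda>_. k) (- \<nu> - k + 1) (ymap ` U) u)
       \<and> (lauricella_ED (- \<nu>) (\<lambda>_. k) (- \<nu> - k + 1) (ymap ` U) u
          \<longleftrightarrow> lauricella_ED (- \<nu>) (\<lambda>_. k) (of_nat CARD('m option) * k)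
                ((\<lambda>y. 1 - y) ` ymap ` U) (\<lambda>x. u (1 - x)))"
proof -
  interpret euler_reduction k \<nu> U \<phi> u
    using assms by unfold_locales
  show ?thesis
    using Delta_eigen_iff_lauricella lauricella_iff_reflected unfolding Delta_eigen_def by blast
qed

end
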